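(* Let $-1<\nu\leq 0$ and let $j_{\nu,1}$ denote the first positive zero of the Bessel function $J_\nu$ of the first kind. Let $p,q\in\mathbb{R}$. Then the inequalities $$(1-p)\mathcal{J}_{\nu+1}(x)+p\frac{\mathcal{J}_{\nu+1}(x)}{\mathcal{J}_{\nu}(x)}>1>(1-q)\mathcal{J}_{\nu+1}(x)+q\frac{\mathcal{J}_{\nu+1}(x)}{\mathcal{J}_{\nu}(x)}$$ hold for all $x\in(0,j_{\nu,1})$ if and only if $p\geq\frac{\nu+1}{\nu+2}$ and $q\leq 0$.
   Context: For $\mu>-1$, $J_\mu(x)=\sum_{n\geq0}\frac{(-1)^n (x/2)^{\mu+2n}}{n!\,\Gamma(\mu+n+1)}$ is the Bessel function of the first kind, and $\mathcal{J}_\mu:\mathbb{R}\to\mathbb{R}$ is the normalized Bessel function $$\mathcal{J}_{\mu}(x)=2^{\mu}\Gamma(\mu+1)x^{-\mu}J_{\mu}(x)=\sum_{n\geq0}\frac{(-1/4)^n}{(\mu+1)_n\, n!}x^{2n},$$ where $(\mu+1)_n=\Gamma(\mu+n+1)/\Gamma(\mu+1)$ is the Pochhammer symbol. In particular $\mathcal{J}_{-1/2}(x)=\cos x$, $\mathcal{J}_{1/2}(x)=\frac{\sin x}{x}$, and $j_{-1/2,1}=\pi/2$. *)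

theory Defs
  imports "HOL-Analysis.Analysis"
begin

definition besselJ :: "real \<Rightarrow> real \<Rightarrow> real" where
  "besselJ mu x = (\<Sum>n. (-1)^n * (x/2) powr (mu + 2 * real n) / (fact n * Gamma (mu + real n + 1)))"

definition normJ :: "real \<Rightarrow> real \<Rightarrow> real" where
  "normJ mu x = (\<Sum>n. (-1/4)^n / (pochhammer (mu + 1) n * fact n) * x ^ (2 * n))"

definition first_zero :: "real \<Rightarrow> real" where
  "first_zero mu = Inf {x. x > 0 \<and> besselJ mu x = 0}"

end

theory Submission
  imports Defs
begin

text \<open>Write \<open>t = x\<^sup>2\<close>, \<open>G(t) = \<J>\<^sub>\<nu>(x)\<close>, \<open>F(t) = \<J>\<^sub>\<nu>\<^sub>+\<^sub>1(x)\<close>, \<open>r = F / G\<close> and \<open>a = \<nu> + 1\<close>.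
  The power series give \<open>G' = - F / (4a)\<close> and \<open>t F' = a (G - F)\<close>, so \<open>r\<close> solves the Riccati
  equation \<open>t r' = a - a r + t r\<^sup>2 / (4a)\<close>. On \<open>(0, j\<^sub>\<nu>\<^sub>,\<^sub>1\<^sup>2)\<close> one shows in turn \<open>G < F < 1\<close>, \<open>r' > 0\<close>
  and \<open>K = F + a r - (a + 1) > 0\<close>, each time by checking that the function in question starts at
  \<open>0\<close> and cannot cross zero from above. The middle terms of the inequalities are \<open>F + s (r - F)\<close>
  with \<open>r > F\<close>, so \<open>K > 0\<close> gives the left inequality for \<open>p \<ge> a / (a + 1)\<close> and \<open>F < 1\<close> the right
  one for \<open>q \<le> 0\<close>. Conversely, the first-order expansion at \<open>t = 0\<close> forces \<open>p \<ge> a / (a + 1)\<close>, and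
  the blow-up of \<open>r\<close> at the first zero of \<open>G\<close>, where \<open>F > 0\<close>, forces \<open>q \<le> 0\<close>.
  The hypothesis \<open>\<nu> \<le> 0\<close> only serves to show that \<open>J\<^sub>\<nu>\<close> has a positive zero.\<close>

lemma neg_before_zero_if_deriv_pos:
  fixes \<phi> :: "real \<Rightarrow> real"
  assumes "(\<phi> has_real_derivative d) (at t)" "d > 0" "\<phi> t = 0" "s < t"
  obtains u where "s < u" "u < t" "\<phi> u < 0"
proof -
  obtain e where e: "e > 0" "\<And>h. h > 0 \<Longrightarrow> h < e \<Longrightarrow> \<phi> (t - h) < \<phi> t"
    using DERIV_pos_inc_left[OF assms(1,2)] by blast
  define h where "h = min (e/2) ((t - s)/2)"
  have "h > 0" "h < e" "h < t - s" using e assms(4) by (auto simp: h_def min_def)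
  then show ?thesis using that[of "t - h"] e(2)[of h] assms(3) by auto
qed

lemma pos_if_deriv_pos_where_nonpos:
  fixes \<phi> \<phi>' :: "real \<Rightarrow> real"
  assumes cont: "continuous_on {0..<T} \<phi>"
    and zero: "\<phi> 0 = 0"
    and deriv: "\<And>t. 0 < t \<Longrightarrow> t < T \<Longrightarrow> (\<phi> has_real_derivative \<phi>' t) (at t)"
    and pos: "\<And>t. 0 < t \<Longrightarrow> t < T \<Longrightarrow> \<phi> t \<le> 0 \<Longrightarrow> \<phi>' t > 0"
    and t: "0 < t" "t < T"
  shows "\<phi> t > 0"
proof (rule ccontr)
  assume "\<not> \<phi> t > 0"
  then have le: "\<phi> t \<le> 0" by simp
  obtain t1 where t1: "0 < t1" "t1 \<le> t" "\<phi> t1 < 0"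
  proof (cases "\<phi> t < 0")
    case True
    then show ?thesis using that t by auto
  next
    case False
    with le have "\<phi> t = 0" by simp
    with neg_before_zero_if_deriv_pos[OF deriv[OF t] pos[OF t le]] t show ?thesis
      by (metis less_imp_le that)
  qed
  have cont1: "continuous_on {0..t1} \<phi>"
    by (rule continuous_on_subset[OF cont]) (use t1 t in auto)
  \<comment> \<open>the last point before \<open>t1\<close> where \<open>\<phi>\<close> is nonnegative; on the rest of \<open>[0,t1]\<close> it increases\<close>
  define S where "S = {0..t1} \<inter> \<phi> -` {0..}"
  define t0 where "t0 = Sup S"
  have "closed S" unfolding S_def
    by (rule continuous_closed_preimage[OF cont1]) auto
  moreover have "0 \<in> S" using zero t1 by (auto simp: S_def)
  moreover have bS: "bdd_above S" unfolding S_def by (rule bdd_aboveI[of _ t1]) auto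
  ultimately have "t0 \<in> S" unfolding t0_def using closed_contains_Sup by blast
  then have t0: "0 \<le> t0" "t0 \<le> t1" "\<phi> t0 \<ge> 0" by (auto simp: S_def)
  then have lt: "t0 < t1" using t1 by (cases "t0 = t1") auto
  have neg: "\<phi> u < 0" if "t0 < u" "u \<le> t1" for u
  proof (rule ccontr)
    assume "\<not> \<phi> u < 0"
    then have "u \<in> S" using that t0 by (auto simp: S_def)
    then have "u \<le> t0" unfolding t0_def by (rule cSup_upper[OF _ bS])
    then show False using that by simp
  qed
  have "\<phi> t0 < \<phi> t1"
  proof (rule DERIV_pos_imp_increasing_open[OF lt])
    fix x assume "t0 < x" "x < t1"
    then show "\<exists>y. (\<phi> has_real_derivative y) (at x) \<and> y > 0"
      using deriv[of x] pos[of x] neg[of x] t0 t1 t by force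
  next
    show "continuous_on {t0..t1} \<phi>" by (rule continuous_on_subset[OF cont1]) (use t0 in auto)
  qed
  then show False using t0 t1 by simp
qed

lemma pos_if_deriv_pos_at_zeros:
  fixes \<phi> \<phi>' :: "real \<Rightarrow> real"
  assumes deriv: "\<And>t. 0 \<le> t \<Longrightarrow> t < T \<Longrightarrow> (\<phi> has_real_derivative \<phi>' t) (at t)"
    and zero: "\<phi> 0 = 0"
    and pos: "\<And>t. 0 \<le> t \<Longrightarrow> t < T \<Longrightarrow> \<phi> t = 0 \<Longrightarrow> \<phi>' t > 0"
    and t: "0 < t" "t < T"
  shows "\<phi> t > 0"
proof (rule ccontr)
  assume "\<not> \<phi> t > 0"
  then have le: "\<phi> t \<le> 0" by simp
  have cont: "continuous_on {0..<T} \<phi>"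
    by (intro continuous_at_imp_continuous_on ballI) (use deriv DERIV_isCont in auto)
  obtain d where d: "d > 0" "\<And>h. h > 0 \<Longrightarrow> h < d \<Longrightarrow> \<phi> 0 < \<phi> (0 + h)"
    using DERIV_pos_inc_right[OF deriv pos] zero t by fastforce
  define a0 where "a0 = min (d/2) (t/2)"
  have a0: "0 < a0" "a0 < t" "\<phi> a0 > 0" using d t zero by (auto simp: a0_def)
  have cont1: "continuous_on {a0..t} \<phi>"
    by (rule continuous_on_subset[OF cont]) (use t a0 in auto)
  \<comment> \<open>the first point after \<open>a0\<close> where \<open>\<phi>\<close> is nonpositive is a zero approached from above\<close>
  define S where "S = {a0..t} \<inter> \<phi> -` {..0}"
  have "closed S" unfolding S_def
    by (rule continuous_closed_preimage[OF cont1]) auto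
  moreover have "t \<in> S" using le a0 by (auto simp: S_def)
  moreover have bS: "bdd_below S" unfolding S_def by (rule bdd_belowI[of _ a0]) auto
  ultimately have "Inf S \<in> S" using closed_contains_Inf by blast
  then have t0: "a0 \<le> Inf S" "Inf S \<le> t" "\<phi> (Inf S) \<le> 0" by (auto simp: S_def)
  then have lt: "a0 < Inf S" using a0 by (cases "a0 = Inf S") auto
  obtain z where z: "a0 \<le> z" "z \<le> Inf S" "\<phi> z = 0"
    using IVT2'[of \<phi> "Inf S" 0 a0] t0 a0 continuous_on_subset[OF cont1, of "{a0..Inf S}"] by auto
  then have "z \<in> S" using t0 by (auto simp: S_def)
  then have z0: "z = Inf S" using cInf_lower[OF _ bS] z by fastforce
  have "0 \<le> z" "z < T" using z0 t0 a0 t by auto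
  then obtain u where u: "a0 < u" "u < z" "\<phi> u < 0"
    using neg_before_zero_if_deriv_pos[OF deriv pos] z lt z0 by metis
  then have "u \<in> S" using z0 t0 by (auto simp: S_def)
  then show False using cInf_lower[OF _ bS] z0 u by fastforce
qed

definition bessel_coeff :: "real \<Rightarrow> nat \<Rightarrow> real" where
  "bessel_coeff \<mu> n = (-1/4)^n / (pochhammer (\<mu> + 1) n * fact n)"

definition bessel_powser :: "real \<Rightarrow> real \<Rightarrow> real" where
  "bessel_powser \<mu> t = (\<Sum>n. bessel_coeff \<mu> n * t ^ n)"

lemma normJ_eq_bessel_powser: "normJ \<mu> x = bessel_powser \<mu> (x\<^sup>2)"
  unfolding normJ_def bessel_powser_def bessel_coeff_def by (simp add: power_mult)

lemma bessel_powser_0 [simp]: "bessel_powser \<mu> 0 = 1"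
  unfolding bessel_powser_def powser_zero by (simp add: bessel_coeff_def)

lemma pochhammer_shift_pos: "\<mu> > -1 \<Longrightarrow> pochhammer (\<mu> + 1) n > (0::real)"
  by (intro pochhammer_pos) simp

lemma bessel_coeff_Suc:
  "\<mu> > -1 \<Longrightarrow> bessel_coeff \<mu> (Suc n) = bessel_coeff \<mu> n * (-1/4) / ((\<mu> + 1 + n) * (n + 1))"
  using pochhammer_shift_pos[of \<mu> n] by (simp add: bessel_coeff_def pochhammer_rec' field_simps)

lemma summable_bessel_powser:
  assumes "\<mu> > -1"
  shows "summable (\<lambda>n. bessel_coeff \<mu> n * t ^ n)"
proof (rule summable_ratio_test[where c = "1/2" and N = "nat \<lceil>\<bar>t\<bar>\<rceil> + 1"])
  fix n assume "n \<ge> nat \<lceil>\<bar>t\<bar>\<rceil> + 1"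
  then have n: "real n \<ge> \<bar>t\<bar>" "real n \<ge> 1" by linarith+
  define D where "D = 4 * ((\<mu> + 1 + real n) * (real n + 1))"
  have "(\<mu> + 1 + real n) * (real n + 1) \<ge> real n * 1"
    using assms by (intro mult_mono) auto
  then have D: "D > 0" "\<bar>t\<bar> / D \<le> 1/2"
    using assms n by (auto simp: D_def field_simps)
  have "norm (bessel_coeff \<mu> (Suc n) * t ^ Suc n) = norm (bessel_coeff \<mu> n * t ^ n) * (\<bar>t\<bar> / D)"
    using assms D by (simp add: bessel_coeff_Suc D_def abs_mult abs_divide field_simps)
  also have "\<dots> \<le> norm (bessel_coeff \<mu> n * t ^ n) * (1/2)"
    using D by (intro mult_left_mono) auto
  finally show "norm (bessel_coeff \<mu> (Suc n) * t ^ Suc n) \<le> 1/2 * norm (bessel_coeff \<mu> n * t ^ n)"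
    by simp
qed simp

lemma diffs_bessel_coeff:
  assumes "\<mu> > -1"
  shows "diffs (bessel_coeff \<mu>) n = - bessel_coeff (\<mu> + 1) n / (4 * (\<mu> + 1))"
proof -
  have p: "pochhammer (\<mu> + 1) (Suc n) = (\<mu> + 1) * pochhammer (\<mu> + 2) n"
    by (simp add: pochhammer_rec add.assoc)
  have "pochhammer (\<mu> + 2) n > 0" using pochhammer_shift_pos[of "\<mu>+1" n] assms by (simp add: add.assoc)
  moreover have f: "fact (Suc n) = (real (Suc n)) * (fact n :: real)" by simp
  have g: "\<And>c x y f::real. c \<noteq> 0 \<Longrightarrow> c * (x / (y * (c * f))) = x / (y * f)" by simp
  ultimately show ?thesis using assms unfolding diffs_def bessel_coeff_def p f
    by (subst g) (auto simp: field_simps add.assoc)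
qed

lemma bessel_powser_deriv:
  assumes "\<mu> > -1"
  shows "(bessel_powser \<mu> has_real_derivative - bessel_powser (\<mu> + 1) t / (4 * (\<mu> + 1))) (at t)"
proof -
  have "(bessel_powser \<mu> has_real_derivative (\<Sum>n. diffs (bessel_coeff \<mu>) n * t ^ n)) (at t)"
    unfolding bessel_powser_def
    by (rule termdiffs_strong_converges_everywhere) (rule summable_bessel_powser[OF assms])
  also have "(\<Sum>n. diffs (bessel_coeff \<mu>) n * t ^ n)
      = (\<Sum>n. (- 1 / (4 * (\<mu> + 1))) * (bessel_coeff (\<mu> + 1) n * t ^ n))"
    by (simp add: diffs_bessel_coeff[OF assms])
  also have "\<dots> = - bessel_powser (\<mu> + 1) t / (4 * (\<mu> + 1))"
    unfolding bessel_powser_def using summable_bessel_powser[of "\<mu>+1" t] assms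
    by (subst suminf_mult) auto
  finally show ?thesis .
qed

lemma isCont_bessel_powser: "\<mu> > -1 \<Longrightarrow> isCont (bessel_powser \<mu>) t"
  using bessel_powser_deriv DERIV_isCont by blast

lemma bessel_coeff_recurrence:
  assumes "\<mu> > -1"
  shows "(\<mu> + 1) * (bessel_coeff \<mu> (Suc n) - bessel_coeff (\<mu> + 1) (Suc n))
       = - bessel_coeff (\<mu> + 2) n / (4 * (\<mu> + 2))"
proof -
  define P where "P = pochhammer (\<mu> + 2) n"
  define K where "K = (-1/4)^n / (P * fact n)"
  have P: "P > 0" using pochhammer_shift_pos[of "\<mu>+1" n] assms by (simp add: add.assoc P_def)
  have m: "\<mu> + 2 + n > 0" "\<mu> + 1 > 0" "\<mu> + 2 > 0" "real n + 1 > 0" using assms by auto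
  have h1: "pochhammer (\<mu> + 1) (Suc n) = (\<mu> + 1) * P"
    by (simp add: pochhammer_rec add.assoc P_def)
  have h2: "pochhammer (\<mu> + 1 + 1) (Suc n) = (\<mu> + 2 + n) * P"
    by (simp add: pochhammer_rec' P_def add.assoc)
  have "(\<mu> + 2) * pochhammer (\<mu> + 2 + 1) n = (\<mu> + 2 + n) * P"
    by (metis h2 pochhammer_rec one_add_one add.assoc)
  then have h3: "pochhammer (\<mu> + 2 + 1) n = (\<mu> + 2 + n) * P / (\<mu> + 2)"
    using m by (simp add: field_simps)
  have fS: "fact (Suc n) = (real n + 1) * (fact n :: real)" by simp
  have A: "bessel_coeff \<mu> (Suc n) = - K / (4 * (\<mu> + 1) * (real n + 1))"
    unfolding bessel_coeff_def h1 fS K_def using m P by (simp add: field_simps)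
  have B: "bessel_coeff (\<mu> + 1) (Suc n) = - K / (4 * (\<mu> + 2 + n) * (real n + 1))"
    unfolding bessel_coeff_def h2 fS K_def using m P by (simp add: field_simps)
  have C: "bessel_coeff (\<mu> + 2) n = K * (\<mu> + 2) / (\<mu> + 2 + n)"
    unfolding bessel_coeff_def h3 K_def using m P by (simp add: field_simps)
  have alg: "D1 * (- K / (4 * D1 * N) - - K / (4 * D2 * N)) = - (K * M / D2) / (4 * M)"
    if "D1 > 0" "D2 > 0" "N > 0" "M > 0" "D2 = D1 + N" for D1 D2 N M :: real
  proof -
    have "D1 * (- K / (4 * D1 * N) - - K / (4 * D2 * N)) = K * (D1 - D2) / (4 * D2 * N)"
      using that(1-4) by (simp add: field_simps)
    also have "\<dots> = K * (- N) / (4 * D2 * N)" using that(5) by simp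
    also have "\<dots> = - K / (4 * D2)" using that(2,3) by (simp add: field_simps)
    also have "\<dots> = - (K * M / D2) / (4 * M)" using that(2,4) by (simp add: field_simps)
    finally show ?thesis .
  qed
  show ?thesis unfolding A B C by (rule alg) (use m in auto)
qed

text \<open>The contiguous relation \<open>t B'\<^sub>\<mu>\<^sub>+\<^sub>1(t) = (\<mu> + 1) (B\<^sub>\<mu>(t) - B\<^sub>\<mu>\<^sub>+\<^sub>1(t))\<close> for \<open>B\<^sub>\<mu> = bessel_powser \<mu>\<close>.\<close>
lemma bessel_powser_recurrence:
  assumes "\<mu> > -1"
  shows "t * (- bessel_powser (\<mu> + 2) t / (4 * (\<mu> + 2)))
       = (\<mu> + 1) * (bessel_powser \<mu> t - bessel_powser (\<mu> + 1) t)"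
proof -
  let ?f = "\<lambda>n. (\<mu> + 1) * (bessel_coeff \<mu> n - bessel_coeff (\<mu> + 1) n) * t ^ n"
  let ?c = "t * (- 1 / (4 * (\<mu> + 2)))"
  have lhs: "?f sums ((\<mu> + 1) * (bessel_powser \<mu> t - bessel_powser (\<mu> + 1) t))"
    unfolding bessel_powser_def using assms
      sums_mult[OF sums_diff[OF summable_sums[OF summable_bessel_powser[OF assms, of t]]
        summable_sums[OF summable_bessel_powser[of "\<mu>+1" t]]], of "\<mu>+1"]
    by (simp add: algebra_simps)
  have "(\<lambda>n. ?f (Suc n)) = (\<lambda>n. ?c * (bessel_coeff (\<mu> + 2) n * t ^ n))"
    using bessel_coeff_recurrence[OF assms] by (auto simp: fun_eq_iff)
  moreover have "(\<lambda>n. ?c * (bessel_coeff (\<mu> + 2) n * t ^ n)) sums (?c * bessel_powser (\<mu> + 2) t)"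
    unfolding bessel_powser_def using summable_bessel_powser[of "\<mu>+2" t] assms
    by (intro sums_mult summable_sums) auto
  ultimately have "(\<lambda>n. ?f (Suc n)) sums (?c * bessel_powser (\<mu> + 2) t)" by simp
  then have "?f sums (?c * bessel_powser (\<mu> + 2) t + ?f 0)"
    by (rule sums_Suc_iff[THEN iffD1])
  then have "?f sums (?c * bessel_powser (\<mu> + 2) t)" by (simp add: bessel_coeff_def)
  from sums_unique2[OF this lhs] show ?thesis by simp
qed

lemma besselJ_eq_bessel_powser:
  assumes mu: "\<mu> > -1" and x: "x > 0"
  shows "besselJ \<mu> x = (x/2) powr \<mu> / Gamma (\<mu> + 1) * bessel_powser \<mu> (x\<^sup>2)"
proof -
  define C where "C = (x/2) powr \<mu> / Gamma (\<mu> + 1)"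
  have G: "Gamma (\<mu> + real n + 1) = Gamma (\<mu> + 1) * pochhammer (\<mu> + 1) n" for n
  proof -
    have "\<mu> + 1 \<notin> \<int>\<^sub>\<le>\<^sub>0" using mu by (auto elim!: nonpos_Ints_cases)
    then have "pochhammer (\<mu> + 1) n = Gamma (\<mu> + 1 + real n) / Gamma (\<mu> + 1)"
      by (rule pochhammer_Gamma)
    moreover have "Gamma (\<mu> + 1) > 0" using mu by (intro Gamma_real_pos) simp
    ultimately show ?thesis by (simp add: field_simps)
  qed
  have summand: "(-1)^n * (x/2) powr (\<mu> + 2 * real n) / (fact n * Gamma (\<mu> + real n + 1))
      = C * (bessel_coeff \<mu> n * (x\<^sup>2)^n)" for n
  proof -
    have "(x/2) powr (\<mu> + 2 * real n) = (x/2) powr \<mu> * (x/2)^(2*n)"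
      using x by (simp add: powr_add powr_realpow[symmetric])
    also have "\<dots> = (x/2) powr \<mu> * (x\<^sup>2)^n / 4^n" by (simp add: power_mult power_divide)
    finally have "(x/2) powr (\<mu> + 2 * real n) = (x/2) powr \<mu> * (x\<^sup>2)^n / 4^n" .
    moreover have "(-1::real)^n / 4^n = (-1/4)^n" by (metis power_divide minus_divide_left)
    ultimately show ?thesis unfolding C_def bessel_coeff_def G by (simp add: field_simps)
  qed
  have "besselJ \<mu> x = (\<Sum>n. C * (bessel_coeff \<mu> n * (x\<^sup>2)^n))"
    unfolding besselJ_def summand ..
  also have "\<dots> = C * bessel_powser \<mu> (x\<^sup>2)"
    unfolding bessel_powser_def using summable_bessel_powser[OF mu] by (rule suminf_mult)
  finally show ?thesis by (simp add: C_def)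
qed

lemma besselJ_eq_0_iff:
  assumes "\<mu> > -1" and "x > 0"
  shows "besselJ \<mu> x = 0 \<longleftrightarrow> bessel_powser \<mu> (x\<^sup>2) = 0"
proof -
  have "Gamma (\<mu> + 1) > 0" using assms by (intro Gamma_real_pos) simp
  moreover have "(x/2) powr \<mu> > 0" using assms by simp
  ultimately show ?thesis using besselJ_eq_bessel_powser[OF assms] by simp
qed

text \<open>At \<open>t = 8\<close> the terms of the series from \<open>n = 3\<close> on alternate in sign and decrease in modulus,
  so \<open>B\<^sub>\<nu>(8)\<close> is at most the sum of its first three terms, \<open>\<nu> / (\<nu> + 2) \<le> 0\<close>.\<close>
lemma bessel_powser_8_tail_decreasing:
  assumes nu: "-1 < (\<nu>::real)"
  defines "A \<equiv> \<lambda>n. 2^(n+3) / (pochhammer (\<nu>+1) (n+3) * fact (n+3))"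
  shows "A (Suc n) \<le> A n"
proof -
  define P where "P = pochhammer (\<nu>+1) (n+3)"
  define F where "F = (fact (n+3) :: real)"
  have P: "P > 0" unfolding P_def by (rule pochhammer_pos) (use nu in simp)
  have F: "F > 0" unfolding F_def by simp
  have e: "A (Suc n) = 2^(n+3) * 2 / ((\<nu> + 1 + real (n+3)) * P * ((real (n+3) + 1) * F))"
  proof -
    have "A (Suc n) = 2^(Suc (n+3)) / (pochhammer (\<nu>+1) (Suc (n+3)) * fact (Suc (n+3)))"
      unfolding A_def by (simp only: add_Suc)
    also have "\<dots> = 2 * 2^(n+3) / (((\<nu> + 1 + real (n+3)) * P) * (real (Suc (n+3)) * F))"
      unfolding P_def F_def by (simp only: pochhammer_rec' fact_Suc power_Suc of_nat_mult)
    finally show ?thesis by (simp add: mult_ac)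
  qed
  have d: "(\<nu> + 1 + real (n+3)) * (real (n+3) + 1) \<ge> 2 * 1"
    using nu by (intro mult_mono) auto
  have "A (Suc n) = A n * (2 / ((\<nu> + 1 + real (n+3)) * (real (n+3) + 1)))"
  proof -
    have An: "A n = 2^(n+3) / (P * F)" unfolding A_def P_def F_def ..
    have "\<nu> + 1 + real (n+3) > 0" "real (n+3) + 1 > 0" using nu by auto
    thus ?thesis unfolding e An using P F by (simp add: field_simps)
  qed
  also have "\<dots> \<le> A n * 1"
  proof (rule mult_left_mono)
    show "A n \<ge> 0" unfolding A_def P_def[symmetric] F_def[symmetric] using P F by simp
    show "2 / ((\<nu> + 1 + real (n+3)) * (real (n+3) + 1)) \<le> 1" using d by simp
  qed
  finally show ?thesis by simp
qed

lemma bessel_powser_8_head: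
  assumes "-1 < \<nu>"
  shows "(\<Sum>i<3. bessel_coeff \<nu> i * 8 ^ i) = \<nu> / (\<nu> + 2)"
proof -
  have a: "\<nu> + 1 \<noteq> 0" "\<nu> + 2 \<noteq> 0" using assms by auto
  have "(\<Sum>i<3. bessel_coeff \<nu> i * 8 ^ i) = 1 - 2 / (\<nu>+1) + 2 / ((\<nu>+1) * (\<nu>+2))"
    by (simp add: bessel_coeff_def numeral_3_eq_3 eval_nat_numeral pochhammer_Suc add.assoc)
  also have "\<dots> = ((\<nu>+1)*(\<nu>+2) - 2*(\<nu>+2) + 2) / ((\<nu>+1) * (\<nu>+2))"
  proof -
    have e1: "2/(\<nu>+1) = 2*(\<nu>+2)/((\<nu>+1)*(\<nu>+2))"
      using nonzero_mult_divide_mult_cancel_right[OF a(2), of 2 "\<nu>+1"] by simp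
    have e2: "(1::real) = ((\<nu>+1)*(\<nu>+2))/((\<nu>+1)*(\<nu>+2))" using a by simp
    show ?thesis by (subst e2, subst e1) (simp only: diff_divide_distrib add_divide_distrib)
  qed
  also have "(\<nu>+1)*(\<nu>+2) - 2*(\<nu>+2) + 2 = \<nu> * (\<nu>+1)" by (simp add: algebra_simps)
  also have "\<nu> * (\<nu>+1) / ((\<nu>+1) * (\<nu>+2)) = \<nu> / (\<nu> + 2)" using a by simp
  finally show ?thesis .
qed

lemma bessel_powser_8_nonpos:
  assumes nu: "-1 < \<nu>" "\<nu> \<le> 0"
  shows "bessel_powser \<nu> 8 \<le> 0"
proof -
  define T where "T n = bessel_coeff \<nu> n * 8 ^ n" for n
  define A where "A = (\<lambda>n. 2^(n+3) / (pochhammer (\<nu>+1) (n+3) * fact (n+3)) :: real)"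
  have sT: "summable T" unfolding T_def by (rule summable_bessel_powser[OF nu(1)])
  have T: "T n = (-2)^n / (pochhammer (\<nu>+1) n * fact n)" for n
    by (simp add: T_def bessel_coeff_def power_mult_distrib[symmetric])
  have TA: "T (n + 3) = - ((-1)^n * A n)" for n
  proof -
    have "(-2::real)^(n+3) = -((-1)^n * 2^(n+3))"
      by (simp add: power_add power_mult_distrib[symmetric])
    then show ?thesis unfolding T A_def by simp
  qed
  have Apos: "A n \<ge> 0" for n
    unfolding A_def using pochhammer_shift_pos[OF nu(1)] by (intro divide_nonneg_pos mult_pos_pos) auto
  have Adec: "A (Suc n) \<le> A n" for n
    unfolding A_def by (rule bessel_powser_8_tail_decreasing[OF nu(1)])
  have "(\<lambda>n. \<bar>T (n + 3)\<bar>) \<longlonglongrightarrow> 0"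
    using LIMSEQ_ignore_initial_segment[OF summable_LIMSEQ_zero[OF sT]] by (simp add: tendsto_rabs_zero_iff)
  moreover have "\<bar>T (n + 3)\<bar> = A n" for n using Apos[of n] TA[of n] by (simp add: abs_mult)
  ultimately have Alim: "A \<longlonglongrightarrow> 0" by simp
  have head: "(\<Sum>i<3. T i) = \<nu> / (\<nu> + 2)"
    unfolding T_def by (rule bessel_powser_8_head[OF nu(1)])
  have "bessel_powser \<nu> 8 = (\<Sum>n. T (n + 3)) + (\<Sum>i<3. T i)"
    unfolding bessel_powser_def T_def[symmetric] by (rule suminf_split_initial_segment[OF sT])
  also have "(\<Sum>n. T (n + 3)) = - (\<Sum>i. (-1)^i * A i)"
    unfolding TA using summable_Leibniz'(1)[OF Alim Apos Adec] by (rule suminf_minus)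
  finally have "bessel_powser \<nu> 8 = - (\<Sum>i. (-1)^i * A i) + \<nu> / (\<nu> + 2)"
    unfolding head .
  moreover have "0 \<le> (\<Sum>i. (-1)^i * A i)"
    using summable_Leibniz'(2)[OF Alim Apos Adec, of 0] by simp
  moreover have "\<nu> / (\<nu> + 2) \<le> 0" using nu by (intro divide_nonpos_pos) auto
  ultimately show ?thesis by linarith
qed

lemma besselJ_has_positive_zero:
  assumes "-1 < \<nu>" "\<nu> \<le> 0"
  shows "\<exists>x>0. besselJ \<nu> x = 0"
proof -
  define h where "h x = bessel_powser \<nu> (x\<^sup>2)" for x
  have "continuous_on {0..sqrt 8} h" unfolding h_def
    by (intro continuous_at_imp_continuous_on ballI continuous_intros
        isCont_o2[OF _ isCont_bessel_powser] assms(1))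
  moreover have "h (sqrt 8) \<le> 0" using bessel_powser_8_nonpos[OF assms] by (simp add: h_def)
  ultimately obtain z where z: "0 \<le> z" "h z = 0"
    using IVT2'[of h "sqrt 8" 0 0] by (auto simp: h_def)
  then have "z > 0" by (cases "z = 0") (auto simp: h_def)
  then show ?thesis using z besselJ_eq_0_iff[OF assms(1)] by (auto simp: h_def)
qed

locale bessel_ratio =
  fixes nu :: real
  assumes nu_gt: "-1 < nu" and zero_exists: "\<exists>x>0. besselJ nu x = 0"
begin

definition "a = nu + 1"
definition "G = bessel_powser nu"
definition "F = bessel_powser (nu + 1)"
definition "F2 = bessel_powser (nu + 2)"
definition "dF t = - F2 t / (4 * (a + 1))"
definition "T = (first_zero nu)\<^sup>2"

lemma a_pos: "a > 0"
  using nu_gt by (simp add: a_def)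

lemma G_deriv: "(G has_real_derivative - F t / (4 * a)) (at t)"
  unfolding G_def F_def a_def by (rule bessel_powser_deriv[OF nu_gt])

lemma F_deriv: "(F has_real_derivative dF t) (at t)"
  using bessel_powser_deriv[of "nu + 1" t] nu_gt
  by (simp add: F_def F2_def dF_def a_def add.assoc)

lemma F_recurrence: "t * dF t = a * (G t - F t)"
  using bessel_powser_recurrence[OF nu_gt, of t]
  by (simp add: F_def F2_def G_def dF_def a_def add.assoc)

lemma G_0 [simp]: "G 0 = 1" and F_0 [simp]: "F 0 = 1" and F2_0 [simp]: "F2 0 = 1"
  by (simp_all add: G_def F_def F2_def)

lemma isCont_G: "isCont G t" using G_deriv DERIV_isCont by blast
lemma isCont_F: "isCont F t" using F_deriv DERIV_isCont by blast

lemma first_zero_props: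
  shows first_zero_pos: "first_zero nu > 0"
    and G_first_zero: "G ((first_zero nu)\<^sup>2) = 0"
    and G_pos_before_first_zero: "\<And>x. 0 \<le> x \<Longrightarrow> x < first_zero nu \<Longrightarrow> G (x\<^sup>2) > 0"
proof -
  define h where "h x = G (x\<^sup>2)" for x
  have hc: "isCont h x" for x unfolding h_def
    by (intro continuous_intros isCont_o2[OF _ isCont_G])
  have hcon: "continuous_on S h" for S by (intro continuous_at_imp_continuous_on ballI hc)
  have h0: "h 0 = 1" by (simp add: h_def)
  obtain \<delta> where \<delta>: "\<delta> > 0" "\<And>x. \<bar>x\<bar> < \<delta> \<Longrightarrow> h x > 0"
  proof -
    obtain d where d: "d > 0" "\<And>x. dist x 0 < d \<Longrightarrow> dist (h x) (h 0) < 1"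
      using hc[of 0] unfolding continuous_at_eps_delta by (meson zero_less_one)
    show ?thesis using that[of d] d h0 by (force simp: dist_real_def abs_if split: if_splits)
  qed
  define Z where "Z = {x. x > 0 \<and> besselJ nu x = 0}"
  have Z: "Z = {x. \<delta> \<le> x \<and> h x = 0}"
  proof -
    have "x > 0 \<and> besselJ nu x = 0 \<longleftrightarrow> \<delta> \<le> x \<and> h x = 0" for x
      using besselJ_eq_0_iff[OF nu_gt, of x] \<delta>(1) \<delta>(2)[of x] by (auto simp: h_def G_def not_less[symmetric])
    then show ?thesis unfolding Z_def by blast
  qed
  have "Z \<noteq> {}" using zero_exists by (auto simp: Z_def)
  moreover have "closed Z" unfolding Z
    by (intro closed_Collect_conj closed_Collect_le closed_Collect_eq continuous_on_const
        continuous_on_id hcon)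
  moreover have bZ: "bdd_below Z" unfolding Z by (rule bdd_belowI[of _ \<delta>]) auto
  ultimately have "first_zero nu \<in> Z"
    unfolding first_zero_def Z_def[symmetric] by (simp add: closed_contains_Inf)
  then show "first_zero nu > 0" "G ((first_zero nu)\<^sup>2) = 0" using \<delta> by (auto simp: Z h_def)
  fix x assume x: "0 \<le> x" "x < first_zero nu"
  show "G (x\<^sup>2) > 0"
  proof (rule ccontr)
    assume "\<not> G (x\<^sup>2) > 0"
    then obtain y where y: "0 \<le> y" "y \<le> x" "h y = 0"
      using IVT2'[of h x 0 0] h0 hcon x by (auto simp: h_def)
    then have "y \<in> Z" using \<delta>(2)[of y] by (force simp: Z)
    then have "first_zero nu \<le> y"
      unfolding first_zero_def Z_def[symmetric] by (rule cInf_lower[OF _ bZ])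
    then show False using x y by simp
  qed
qed

lemma T_pos: "T > 0"
  using first_zero_pos by (simp add: T_def)

lemma G_T: "G T = 0"
  using G_first_zero by (simp add: T_def)

lemma G_pos: "0 \<le> t \<Longrightarrow> t < T \<Longrightarrow> G t > 0"
  using G_pos_before_first_zero[of "sqrt t"] first_zero_pos
  by (simp add: T_def real_sqrt_less_iff real_less_lsqrt)

lemma G_less_F: "0 < t \<Longrightarrow> t < T \<Longrightarrow> G t < F t"
proof -
  assume t: "0 < t" "t < T"
  have "F t - G t > 0"
  proof (rule pos_if_deriv_pos_at_zeros[where \<phi> = "\<lambda>t. F t - G t" and \<phi>' = "\<lambda>t. dF t + F t / (4 * a)"])
    fix t show "((\<lambda>t. F t - G t) has_real_derivative dF t + F t / (4 * a)) (at t)"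
      using DERIV_diff[OF F_deriv G_deriv, of t] by simp
  next
    fix t assume t: "0 \<le> t" "t < T" "F t - G t = 0"
    \<comment> \<open>for \<open>t > 0\<close>, \<open>F t = G t\<close> makes \<open>dF t = 0\<close> by the recurrence\<close>
    show "dF t + F t / (4 * a) > 0"
    proof (cases "t = 0")
      case True
      have "1 / (4 * (a + 1)) < 1 / (4 * a)" using a_pos by (intro frac_less2) auto
      then show ?thesis using True by (simp add: dF_def)
    next
      case False
      then have "dF t = 0" using F_recurrence[of t] t by simp
      moreover have "F t > 0" using G_pos[of t] t by simp
      ultimately show ?thesis using a_pos by simp
    qed
  qed (use t in simp_all)
  then show ?thesis by simp
qed

lemma F_pos: "0 \<le> t \<Longrightarrow> t < T \<Longrightarrow> F t > 0"
  using G_less_F[of t] G_pos[of t] by (cases "t = 0") auto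

lemma G_less_1: "0 < t \<Longrightarrow> t < T \<Longrightarrow> G t < 1"
proof -
  assume t: "0 < t" "t < T"
  have "1 - G t > 0"
  proof (rule pos_if_deriv_pos_where_nonpos[where \<phi> = "\<lambda>t. 1 - G t" and \<phi>' = "\<lambda>t. F t / (4 * a)"])
    show "continuous_on {0..<T} (\<lambda>t. 1 - G t)"
      by (intro continuous_at_imp_continuous_on ballI continuous_intros isCont_G)
    fix t show "((\<lambda>t. 1 - G t) has_real_derivative F t / (4 * a)) (at t)"
      using DERIV_diff[OF DERIV_const G_deriv, of 1 t] by simp
  next
    fix t assume "0 < t" "t < T"
    then show "F t / (4 * a) > 0" using F_pos[of t] a_pos by simp
  qed (use t in simp_all)
  then show ?thesis by simp
qed

lemma F_less_1: "0 < t \<Longrightarrow> t < T \<Longrightarrow> F t < 1"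
proof -
  assume t: "0 < t" "t < T"
  have "1 - F t > 0"
  proof (rule pos_if_deriv_pos_where_nonpos[where \<phi> = "\<lambda>t. 1 - F t" and \<phi>' = "\<lambda>t. - dF t"])
    show "continuous_on {0..<T} (\<lambda>t. 1 - F t)"
      by (intro continuous_at_imp_continuous_on ballI continuous_intros isCont_F)
    fix t show "((\<lambda>t. 1 - F t) has_real_derivative - dF t) (at t)"
      using DERIV_diff[OF DERIV_const F_deriv, of 1 t] by simp
  next
    fix t assume t: "0 < t" "t < T"
    then have "t * - dF t > 0" using F_recurrence[of t] G_less_F[OF t] a_pos by (simp add: mult_less_0_iff)
    then show "- dF t > 0" using t by (simp add: mult_less_0_iff)
  qed (use t in simp_all)
  then show ?thesis by simp
qed

text \<open>\<open>t\<^sup>a F(t)\<close> has derivative \<open>a t\<^sup>a\<^sup>-\<^sup>1 G(t)\<close>, which is positive before \<open>T\<close>.\<close>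
lemma F_T_pos: "F T > 0"
proof -
  define \<Phi> where "\<Phi> t = t powr a * F t" for t
  have "\<Phi> (T/2) < \<Phi> T"
  proof (rule DERIV_pos_imp_increasing_open[of "T/2" T])
    fix t assume t: "T/2 < t" "t < T"
    then have tp: "t > 0" using T_pos by simp
    have "(\<Phi> has_real_derivative a * t powr (a - 1) * F t + dF t * t powr a) (at t)"
      unfolding \<Phi>_def by (rule DERIV_mult[OF has_real_derivative_powr[OF tp] F_deriv])
    moreover have "a * t powr (a - 1) * F t + dF t * t powr a = t powr (a - 1) * (a * F t + t * dF t)"
      using tp by (simp add: powr_diff algebra_simps)
    moreover have "a * F t + t * dF t = a * G t" using F_recurrence[of t] by (simp add: algebra_simps)
    moreover have "t powr (a - 1) * (a * G t) > 0" using G_pos[of t] t tp a_pos by simp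
    ultimately show "\<exists>y. (\<Phi> has_real_derivative y) (at t) \<and> y > 0" by metis
  next
    show "continuous_on {T/2..T} \<Phi>" unfolding \<Phi>_def using T_pos
      by (intro continuous_on_mult continuous_on_powr' continuous_on_id continuous_on_const
          continuous_at_imp_continuous_on ballI isCont_F) auto
  qed (use T_pos in simp)
  moreover have "\<Phi> (T/2) > 0" unfolding \<Phi>_def using T_pos F_pos[of "T/2"] by simp
  ultimately have "T powr a * F T > 0" by (simp add: \<Phi>_def)
  then show ?thesis using T_pos by (simp add: zero_less_mult_iff)
qed

text \<open>\<open>r(x\<^sup>2) = \<J>\<^sub>\<nu>\<^sub>+\<^sub>1(x) / \<J>\<^sub>\<nu>(x)\<close>.\<close>
definition "r t = F t / G t"
definition "dr t = (dF t * G t + F t * F t / (4 * a)) / (G t * G t)"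

lemma r_deriv: "G t \<noteq> 0 \<Longrightarrow> (r has_real_derivative dr t) (at t)"
  unfolding r_def[abs_def] dr_def using DERIV_divide[OF F_deriv G_deriv] by simp

lemma isCont_r: "0 \<le> t \<Longrightarrow> t < T \<Longrightarrow> isCont r t"
  using r_deriv[of t] G_pos[of t] DERIV_isCont by force

lemma r_0 [simp]: "r 0 = 1"
  by (simp add: r_def)

lemma dr_0: "dr 0 = 1 / (4 * a) - 1 / (4 * (a + 1))"
  by (simp add: dr_def dF_def)

lemma r_gt_1: "0 < t \<Longrightarrow> t < T \<Longrightarrow> r t > 1"
  using G_less_F[of t] G_pos[of t] by (simp add: r_def)

lemma r_pos: "0 \<le> t \<Longrightarrow> t < T \<Longrightarrow> r t > 0"
  using F_pos[of t] G_pos[of t] by (simp add: r_def)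

lemma F_less_r: "0 < t \<Longrightarrow> t < T \<Longrightarrow> F t < r t"
proof -
  assume t: "0 < t" "t < T"
  have "F t / 1 < F t / G t"
    using F_pos[of t] G_pos[of t] G_less_1[of t] t by (intro divide_strict_left_mono) auto
  then show ?thesis by (simp add: r_def)
qed

definition "psi t = a - a * r t + t * (r t * r t) / (4 * a)"

lemma r_riccati: "0 \<le> t \<Longrightarrow> t < T \<Longrightarrow> t * dr t = psi t"
proof -
  assume t: "0 \<le> t" "t < T"
  have g: "G t > 0" using G_pos t by simp
  have "t * dr t = (t * dF t * G t + t * F t * F t / (4 * a)) / (G t * G t)"
    by (simp add: dr_def algebra_simps add_divide_distrib)
  also have "\<dots> = (a * (G t - F t) * G t + t * F t * F t / (4 * a)) / (G t * G t)"
    by (simp only: F_recurrence)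
  also have "\<dots> = psi t"
    unfolding psi_def r_def using g a_pos by (simp add: field_simps)
  finally show ?thesis .
qed

lemma dr_pos: "0 < t \<Longrightarrow> t < T \<Longrightarrow> dr t > 0"
proof -
  assume t: "0 < t" "t < T"
  define dpsi where "dpsi t = - (a * dr t) + (r t * r t + t * (2 * r t * dr t)) / (4 * a)" for t
  have "psi t > 0"
  proof (rule pos_if_deriv_pos_at_zeros[where \<phi> = psi and \<phi>' = dpsi])
    fix t assume "0 \<le> t" "t < T"
    then have "(r has_real_derivative dr t) (at t)" using G_pos[of t] r_deriv by simp
    then have "((\<lambda>t. a - a * r t + t * (r t * r t) / (4 * a)) has_real_derivative
        0 - a * dr t + ((1 * (r t * r t) + (dr t * r t + dr t * r t) * t) / (4 * a))) (at t)"
      by (intro DERIV_add DERIV_diff DERIV_const DERIV_cmult DERIV_cdivide DERIV_mult DERIV_ident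
          | simp)+
    then show "(psi has_real_derivative dpsi t) (at t)"
      unfolding psi_def[abs_def] dpsi_def by (simp add: algebra_simps)
  next
    fix t assume t: "0 \<le> t" "t < T" "psi t = 0"
    \<comment> \<open>at \<open>t > 0\<close> a zero of \<open>psi\<close> is a critical point of \<open>r\<close>; at \<open>t = 0\<close> use \<open>dr 0 < 1 / (4 a)\<close>\<close>
    show "dpsi t > 0"
    proof (cases "t = 0")
      case True
      have "a * (1 / (4 * a)) = 1 / 4" "a * (1 / (4 * (a + 1))) = 1 / 4 - 1 / (4 * (a + 1))"
        using a_pos by (simp_all add: field_simps)
      then have "a * (1 / (4 * a) - 1 / (4 * (a + 1))) = 1 / (4 * (a + 1))"
        by (simp add: right_diff_distrib)
      also have "\<dots> < 1 / (4 * a)" using a_pos by (intro frac_less2) auto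
      finally have "a * (1 / (4 * a) - 1 / (4 * (a + 1))) < 1 / (4 * a)" .
      then show ?thesis using True by (simp add: dpsi_def dr_0)
    next
      case False
      then have "dr t = 0" using r_riccati[of t] t by simp
      then show ?thesis using r_pos[of t] t a_pos by (simp add: dpsi_def)
    qed
  qed (use t in \<open>simp_all add: psi_def\<close>)
  then show ?thesis using r_riccati[of t] t by (metis less_eq_real_def zero_less_mult_pos)
qed


definition "c = 4 * a * (a + 1)"
definition "N t = (if t = 0 then 0 else r t ^ 3 - c * ((r t - 1) / t))"

lemma N_deriv:
  assumes t: "0 < t" "t < T"
  shows "(N has_real_derivative 3 * (r t)\<^sup>2 * dr t + (a + 1) * (c * ((r t - 1) / t) - (r t)\<^sup>2) / t) (at t)"
proof -
  have "(r has_real_derivative dr t) (at t)" using r_deriv[of t] G_pos[of t] t by simp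
  then have "((\<lambda>t. r t ^ 3 - c * ((r t - 1) / t)) has_real_derivative
      of_nat 3 * (dr t * r t ^ (3 - Suc 0)) - c * (((dr t - 0) * t - (r t - 1) * 1) / (t * t))) (at t)"
    using t by (intro DERIV_diff DERIV_cmult DERIV_power DERIV_divide DERIV_ident DERIV_const) auto
  then have "((\<lambda>t. r t ^ 3 - c * ((r t - 1) / t)) has_real_derivative
      3 * (r t)\<^sup>2 * dr t - c * ((dr t * t - (r t - 1)) / (t * t))) (at t)"
    by (simp add: mult_ac)
  then have d: "(N has_real_derivative 3 * (r t)\<^sup>2 * dr t - c * ((dr t * t - (r t - 1)) / (t * t))) (at t)"
    by (rule has_field_derivative_transform_within_open[where S = "{0<..}"])
      (use t in \<open>auto simp: N_def\<close>)
  have "c * (dr t * t - (r t - 1)) = c * (a - a * r t + t * (r t * r t) / (4 * a) - (r t - 1))"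
    using r_riccati[of t] t by (simp add: psi_def mult.commute)
  also have "\<dots> = (a + 1) * (c * (r t - 1)) * (-1) + (a + 1) * t * (r t)\<^sup>2"
    unfolding c_def using a_pos by (simp add: field_simps power2_eq_square)
  finally have e: "c * (dr t * t - (r t - 1)) = (a + 1) * (c * (r t - 1)) * (-1) + (a + 1) * t * (r t)\<^sup>2" .
  have "c * ((dr t * t - (r t - 1)) / (t * t)) = ((a + 1) * (c * (r t - 1)) * (-1) + (a + 1) * t * (r t)\<^sup>2) / (t * t)"
    unfolding e[symmetric] by simp
  also have "\<dots> = - ((a + 1) * (c * ((r t - 1) / t) - (r t)\<^sup>2) / t)"
    using t by (simp add: field_simps)
  finally have "c * ((dr t * t - (r t - 1)) / (t * t)) = - ((a + 1) * (c * ((r t - 1) / t) - (r t)\<^sup>2) / t)" .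
  with d show ?thesis by simp
qed

lemma isCont_N_0: "isCont N 0"
proof -
  have "(r has_real_derivative dr 0) (at 0)" using r_deriv[of 0] by simp
  then have "((\<lambda>y. (r y - 1) / y) \<longlongrightarrow> dr 0) (at 0)"
    by (simp add: has_field_derivative_iff)
  moreover have "(r \<longlongrightarrow> 1) (at 0)" using isCont_r[of 0] T_pos by (simp add: isCont_def)
  ultimately have "((\<lambda>y. r y ^ 3 - c * ((r y - 1) / y)) \<longlongrightarrow> 1 ^ 3 - c * dr 0) (at 0)"
    by (intro tendsto_intros)
  \<comment> \<open>\<open>c\<close> is chosen so that \<open>c * dr 0 = 1\<close>\<close>
  moreover have "c * dr 0 = 1"
  proof -
    have "c * dr 0 = 4 * a * (a + 1) / (4 * a) - 4 * a * (a + 1) / (4 * (a + 1))"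
      unfolding c_def dr_0 by (simp add: right_diff_distrib)
    also have "4 * a * (a + 1) / (4 * a) = a + 1" using a_pos by simp
    also have "4 * a * (a + 1) / (4 * (a + 1)) = a"
      using nonzero_mult_divide_mult_cancel_right[of "a + 1" "4 * a" 4] a_pos by simp
    finally show ?thesis by simp
  qed
  ultimately have "((\<lambda>y. r y ^ 3 - c * ((r y - 1) / y)) \<longlongrightarrow> 0) (at 0)" by simp
  moreover have "eventually (\<lambda>y. r y ^ 3 - c * ((r y - 1) / y) = N y) (at 0)"
    by (auto simp: N_def eventually_at_filter)
  ultimately have "(N \<longlongrightarrow> 0) (at 0)" by (rule Lim_transform_eventually)
  then show ?thesis by (simp add: isCont_def N_def)
qed

lemma N_pos: "0 < t \<Longrightarrow> t < T \<Longrightarrow> N t > 0"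
proof (rule pos_if_deriv_pos_where_nonpos[where \<phi> = N and T = T])
  show "continuous_on {0..<T} N"
  proof (intro continuous_at_imp_continuous_on ballI)
    fix x assume "x \<in> {0..<T}"
    then show "isCont N x" using isCont_N_0 N_deriv[of x] DERIV_isCont by (cases "x = 0") auto
  qed
next
  fix t assume t: "0 < t" "t < T"
  then show "(N has_real_derivative 3 * (r t)\<^sup>2 * dr t + (a + 1) * (c * ((r t - 1) / t) - (r t)\<^sup>2) / t) (at t)"
    by (rule N_deriv)
  assume "N t \<le> 0"
  then have "r t ^ 3 \<le> c * ((r t - 1) / t)" using t by (simp add: N_def)
  moreover have "(r t)\<^sup>2 < r t ^ 3"
    using r_gt_1[OF t] by (simp add: power2_eq_square power3_eq_cube)
  ultimately have "(a + 1) * (c * ((r t - 1) / t) - (r t)\<^sup>2) / t > 0" using a_pos t by simp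
  moreover have "3 * (r t)\<^sup>2 * dr t > 0" using dr_pos[OF t] r_gt_1[OF t] by simp
  ultimately show "3 * (r t)\<^sup>2 * dr t + (a + 1) * (c * ((r t - 1) / t) - (r t)\<^sup>2) / t > 0"
    by linarith
qed (simp add: N_def)

text \<open>\<open>K / (a + 1)\<close> is the excess over \<open>1\<close> of the left inequality at the critical \<open>p = a / (a + 1)\<close>;
  wherever \<open>K \<le> 0\<close>, \<open>t K'(t)\<close> is bounded below by \<open>t N(t) / (4 r(t))\<close>.\<close>
definition "K t = F t + a * r t - (a + 1)"

lemma K_deriv_lower_bound:
  assumes t: "0 < t" "t < T" and K: "K t \<le> 0"
  shows "t * (dF t + a * dr t) \<ge> t * N t / (4 * r t)"
proof -
  define s where "s = r t - 1"
  have r1: "r t > 1" using r_gt_1[OF t] .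
  have G: "G t = F t / r t" using G_pos[of t] F_pos[of t] t by (simp add: r_def)
  have "t * (dF t + a * dr t) = t * dF t + a * (t * dr t)" by (simp add: algebra_simps)
  also have "\<dots> = a * (G t - F t) + a * psi t"
    using F_recurrence[of t] r_riccati[of t] t by simp
  also have "a * (G t - F t) = - (a * s / r t) * F t"
    unfolding G s_def using r1 by (simp add: field_simps)
  also have "- (a * s / r t) * F t \<ge> - (a * s / r t) * (a + 1 - a * r t)"
    using K r1 a_pos by (intro mult_left_mono_neg) (auto simp: K_def s_def)
  moreover have "- (a * s / r t) * (a + 1 - a * r t) + a * psi t = t * N t / (4 * r t)"
    using t r1 a_pos
    by (simp add: N_def psi_def c_def s_def field_simps power2_eq_square power3_eq_cube)
  ultimately show ?thesis by linarith
qed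

lemma K_pos: "0 < t \<Longrightarrow> t < T \<Longrightarrow> K t > 0"
proof (rule pos_if_deriv_pos_where_nonpos[where \<phi> = K and \<phi>' = "\<lambda>t. dF t + a * dr t" and T = T])
  show "continuous_on {0..<T} K"
    unfolding K_def[abs_def] using isCont_r
    by (intro continuous_at_imp_continuous_on ballI continuous_intros isCont_F) auto
  fix t assume t: "0 < t" "t < T"
  then show "(K has_real_derivative dF t + a * dr t) (at t)"
    unfolding K_def[abs_def] using G_pos[of t] DERIV_diff[OF DERIV_add[OF F_deriv DERIV_cmult[OF r_deriv]] DERIV_const]
    by simp
  assume "K t \<le> 0"
  then have "t * (dF t + a * dr t) > 0"
    using K_deriv_lower_bound[OF t] N_pos[OF t] r_gt_1[OF t] t
    by (smt (verit) divide_pos_pos mult_pos_pos)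
  then show "dF t + a * dr t > 0" using t by (simp add: zero_less_mult_iff)
qed (simp add: K_def)

definition "mix s t = (1 - s) * F t + s * r t"

lemma mix_gt_1:
  assumes p: "a / (a + 1) \<le> p" and t: "0 < t" "t < T"
  shows "mix p t > 1"
proof -
  have "mix p t - 1 = (F t - 1) + p * (r t - F t)" by (simp add: mix_def algebra_simps)
  also have "\<dots> \<ge> (F t - 1) + a / (a + 1) * (r t - F t)"
    using mult_right_mono[OF p, of "r t - F t"] F_less_r[OF t] by simp
  also have "(F t - 1) + a / (a + 1) * (r t - F t) = K t / (a + 1)"
    using a_pos by (simp add: K_def field_simps)
  finally show ?thesis using K_pos[OF t] a_pos by (smt (verit) divide_pos_pos)
qed

lemma mix_less_1:
  assumes q: "q \<le> 0" and t: "0 < t" "t < T"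
  shows "mix q t < 1"
proof -
  have "mix q t = F t + q * (r t - F t)" by (simp add: mix_def algebra_simps)
  also have "\<dots> \<le> F t" using q F_less_r[OF t] by (simp add: mult_nonpos_nonneg)
  finally show ?thesis using F_less_1[OF t] by simp
qed

text \<open>Near \<open>t = 0\<close>, \<open>mix p t = 1 + (p / (4 a) - 1 / (4 (a + 1))) t + O(t\<^sup>2)\<close>.\<close>
lemma mix_gt_1_imp:
  assumes gt: "\<And>t. 0 < t \<Longrightarrow> t < T \<Longrightarrow> mix p t > 1"
  shows "a / (a + 1) \<le> p"
proof (rule ccontr)
  assume "\<not> a / (a + 1) \<le> p"
  then have "p / (4 * a) < (a / (a + 1)) / (4 * a)" using a_pos by (intro divide_strict_right_mono) auto
  also have "\<dots> = 1 / (4 * (a + 1))" using a_pos by simp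
  moreover have "(1 - p) * (- 1 / D) + p * (1 / (4 * a) - 1 / D) = p * (1 / (4 * a)) - 1 / D"
    if "D \<noteq> 0" for D :: real
    using that by (simp add: field_simps)
  then have "(1 - p) * dF 0 + p * dr 0 = p * (1 / (4 * a)) - 1 / (4 * (a + 1))"
    using a_pos by (simp add: dF_def dr_0)
  ultimately have neg: "(1 - p) * dF 0 + p * dr 0 < 0" by simp
  have "(mix p has_real_derivative (1 - p) * dF 0 + p * dr 0) (at 0)"
    unfolding mix_def[abs_def] using r_deriv[of 0]
    by (intro DERIV_add DERIV_cmult F_deriv) auto
  then obtain d where d: "d > 0" "\<And>h. h > 0 \<Longrightarrow> h < d \<Longrightarrow> mix p (0 + h) < mix p 0"
    using DERIV_neg_dec_right neg by blast
  define h where "h = min (d/2) (T/2)"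
  have h: "0 < h" "h < d" "h < T" using d T_pos by (auto simp: h_def)
  then show False using d(2)[OF h(1,2)] gt[OF h(1,3)] by (simp add: mix_def)
qed

text \<open>As \<open>t \<rightarrow> T\<close>, \<open>r t \<rightarrow> \<infinity>\<close> since \<open>G T = 0 < F T\<close>, so \<open>mix q t < 1\<close> fails for \<open>q > 0\<close>.\<close>
lemma mix_less_1_imp:
  assumes less: "\<And>t. 0 < t \<Longrightarrow> t < T \<Longrightarrow> mix q t < 1"
  shows "q \<le> 0"
proof (rule ccontr)
  assume "\<not> q \<le> 0"
  define \<Phi> where "\<Phi> t = (1 - q) * F t * G t + q * F t - G t" for t
  have "\<Phi> T > 0" using F_T_pos \<open>\<not> q \<le> 0\<close> by (simp add: \<Phi>_def G_T)
  moreover have "isCont \<Phi> T" unfolding \<Phi>_def[abs_def] by (intro continuous_intros isCont_F isCont_G)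
  ultimately obtain \<delta> where \<delta>: "\<delta> > 0" "\<And>y. dist y T < \<delta> \<Longrightarrow> dist (\<Phi> y) (\<Phi> T) < \<Phi> T"
    unfolding continuous_at_eps_delta by blast
  define t where "t = max (T/2) (T - \<delta>/2)"
  have t: "0 < t" "t < T" "dist t T < \<delta>" using T_pos \<delta> by (auto simp: t_def dist_real_def)
  have "\<Phi> t > 0" using \<delta>(2)[OF t(3)] by (auto simp: dist_real_def abs_if split: if_splits)
  moreover have "\<Phi> t = G t * (mix q t - 1)"
    using G_pos[of t] t by (simp add: \<Phi>_def mix_def r_def field_simps)
  ultimately show False using less[OF t(1,2)] G_pos[of t] t by (simp add: zero_less_mult_iff)
qed

lemma mix_bounds_iff:
  "(\<forall>t. 0 < t \<and> t < T \<longrightarrow> mix p t > 1 \<and> 1 > mix q t) \<longleftrightarrow> (a / (a + 1) \<le> p \<and> q \<le> 0)"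
  using mix_gt_1 mix_less_1 mix_gt_1_imp mix_less_1_imp by blast

end

theorem theorem3p2:
  fixes nu p q :: real
  assumes "-1 < nu" and "nu \<le> 0"
  shows "(\<forall>x. 0 < x \<and> x < first_zero nu \<longrightarrow>
            (1 - p) * normJ (nu + 1) x + p * (normJ (nu + 1) x / normJ nu x) > 1
          \<and> 1 > (1 - q) * normJ (nu + 1) x + q * (normJ (nu + 1) x / normJ nu x))
         \<longleftrightarrow> (p \<ge> (nu + 1) / (nu + 2) \<and> q \<le> 0)"
proof -
  interpret bessel_ratio nu
    using assms besselJ_has_positive_zero by unfold_locales auto
  have mix: "(1 - s) * normJ (nu + 1) x + s * (normJ (nu + 1) x / normJ nu x) = mix s (x\<^sup>2)" for s x
    by (simp add: normJ_eq_bessel_powser mix_def F_def G_def r_def)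
  have change_var: "(\<forall>x. 0 < x \<and> x < first_zero nu \<longrightarrow> P (x\<^sup>2)) \<longleftrightarrow> (\<forall>t. 0 < t \<and> t < T \<longrightarrow> P t)" for P
  proof safe
    fix t assume "\<forall>x. 0 < x \<and> x < first_zero nu \<longrightarrow> P (x\<^sup>2)" "0 < t" "t < T"
    moreover have "sqrt t < first_zero nu"
      using \<open>t < T\<close> first_zero_pos by (simp add: T_def real_less_lsqrt)
    ultimately show "P t" by (metis less_imp_le real_sqrt_gt_zero real_sqrt_pow2)
  next
    fix x assume "\<forall>t. 0 < t \<and> t < T \<longrightarrow> P t" "0 < x" "x < first_zero nu"
    then show "P (x\<^sup>2)" by (simp add: T_def power_strict_mono)
  qed
  moreover have "(nu + 1) / (nu + 2) = a / (a + 1)" by (simp add: a_def add.assoc)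
  ultimately show ?thesis
    unfolding mix using mix_bounds_iff[of p q] by (simp add: change_var[of "\<lambda>t. 1 < mix p t \<and> mix q t < 1"])
qed

end
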